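(* Let $d\ge 2$, let $P\subset\mathbb{R}^d$ be a generic convex simplicial $d$-dimensional polytope, and let $P'\subset\mathbb{R}^{d+1}$ be its lifting. Let $P_+$ be the intersection, over all facets $F$ of $P'$, of the closed upper half-spaces bounded by $\mathrm{aff}(F)$, and let $T_+$ be the intersection, over all facets $F$ of $P'$, of the closed upper half-spaces bounded by the hyperplane through the origin parallel to $\mathrm{aff}(F)$. Then for each facet of $T_+$ there is an unbounded facet of $P_+$ parallel to it.
   Context: $P$ is generic if no $d+2$ of its vertices lie on a common $(d-1)$-dimensional sphere and $P$ is not a $d$-simplex. With $V$ the vertex set of $P$ and $f(x_1,\dots,x_d)=(x_1,\dots,x_d,x_1^2+\dots+x_d^2)$, the lifting $P'$ is the convex hull of $f(V)$ in $\mathbb{R}^{d+1}$; it is a $(d+1)$-dimensional simplicial polytope none of whose facet hyperplanes is vertical (i.e. every facet normal has nonzero last coordinate). For a non-vertical hyperplane $H$ in $\mathbb{R}^{d+1}$, its closed upper half-space is the set of points lying on or above $H$ with respect to the last coordinate. *)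

theory Defs
  imports "HOL-Analysis.Analysis"
begin

text \<open>R^{d+1} is modelled as 'a \<times> real, with 'a a Euclidean space of dimension d;
  the last coordinate is the snd component.\<close>

definition vertices :: "'a::euclidean_space set \<Rightarrow> 'a set" where
  "vertices P = {v. v extreme_point_of P}"

definition simplicial_polytope :: "'a::euclidean_space set \<Rightarrow> bool" where
  "simplicial_polytope P \<longleftrightarrow> polytope P \<and> (\<forall>F. F facet_of P \<longrightarrow> (\<exists>n. n simplex F))"

definition generic_polytope :: "'a::euclidean_space set \<Rightarrow> bool" where
  "generic_polytope P \<longleftrightarrow>
     \<not> (\<exists>S c r. S \<subseteq> vertices P \<and> card S = DIM('a) + 2 \<and> r > 0 \<and> S \<subseteq> sphere c r)
     \<and> \<not> (int DIM('a)) simplex P"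

definition lift_map :: "'a::euclidean_space \<Rightarrow> 'a \<times> real" where
  "lift_map x = (x, (norm x)\<^sup>2)"

definition lifting :: "'a::euclidean_space set \<Rightarrow> ('a \<times> real) set" where
  "lifting P = convex hull (lift_map ` vertices P)"

definition upper_halfspace :: "('a::euclidean_space \<times> real) set \<Rightarrow> ('a \<times> real) set" where
  "upper_halfspace H = {p. \<exists>q\<in>H. fst q = fst p \<and> snd q \<le> snd p}"

definition direction_of :: "'b::real_vector set \<Rightarrow> 'b set" where
  "direction_of A = {x - y | x y. x \<in> A \<and> y \<in> A}"

definition P_plus :: "'a::euclidean_space set \<Rightarrow> ('a \<times> real) set" where
  "P_plus P = \<Inter> {upper_halfspace (affine hull F) | F. F facet_of lifting P}"

definition T_plus :: "'a::euclidean_space set \<Rightarrow> ('a \<times> real) set" where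
  "T_plus P = \<Inter> {upper_halfspace (direction_of (affine hull F)) | F. F facet_of lifting P}"

definition parallel_sets :: "'b::euclidean_space set \<Rightarrow> 'b set \<Rightarrow> bool" where
  "parallel_sets A B \<longleftrightarrow> (\<exists>v. affine hull A = (\<lambda>x. v + x) ` (affine hull B))"

end

theory Submission
  imports Defs
begin

text \<open>Genericity makes the lifting \<open>P'\<close> full-dimensional (otherwise all vertices of \<open>P\<close> would
  lie on a hyperplane or on a sphere), and simpliciality rules out vertical facets (a vertical
  face of \<open>P'\<close> lies over a proper face of \<open>P\<close>, which has at most \<open>d\<close> vertices). So every facet
  hyperplane of \<open>P'\<close> is the graph of an affine function \<open>x \<mapsto> a\<^sub>F \<bullet> x + c\<^sub>F\<close>, \<open>P\<^sub>+\<close> is the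
  epigraph of \<open>max\<^sub>F (a\<^sub>F \<bullet> x + c\<^sub>F)\<close> and \<open>T\<^sub>+\<close> that of its recession function \<open>max\<^sub>F a\<^sub>F \<bullet> x\<close>.
  A facet of \<open>T\<^sub>+\<close> is the graph of a linear function \<open>q\<close> over a full-dimensional cone; at a
  generic point \<open>x\<close> of that cone \<open>q \<bullet> x\<close> strictly exceeds every \<open>a\<^sub>F \<bullet> x\<close> with \<open>a\<^sub>F \<noteq> q\<close>, which forces
  \<open>q = a\<^sub>F\<close> for some \<open>F\<close>. Taking such an \<open>F\<close> with \<open>c\<^sub>F\<close> maximal, the piece \<open>a\<^sub>F \<bullet> x + c\<^sub>F\<close> is the
  maximum on an open set containing a tail of the ray through \<open>x\<close>; this gives an unbounded facet
  of \<open>P\<^sub>+\<close> in a translate of the hyperplane of the given facet.\<close>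

section \<open>Hyperplanes and rays\<close>

lemma nonvertical_hyperplane_eq:
  "{v. snd v = q \<bullet> fst v + b} = {v. (- q, 1) \<bullet> v = b}"
  by (auto simp: inner_prod_def)

lemma nonvertical_hyperplane_translate:
  "{v. snd v = q \<bullet> fst v + b} = (+) (0, b) ` {v. snd v = q \<bullet> fst v}"
proof (intro equalityI subsetI)
  fix v :: "'a::real_inner \<times> real"
  assume "v \<in> {v. snd v = q \<bullet> fst v + b}"
  then have "v - (0, b) \<in> {v. snd v = q \<bullet> fst v}" and "v = (0, b) + (v - (0, b))"
    by auto
  then show "v \<in> (+) (0, b) ` {v. snd v = q \<bullet> fst v}"
    by blast
qed auto

lemma upper_halfspace_nonvertical_hyperplane:
  "upper_halfspace {v. snd v = q \<bullet> fst v + b} = {v. q \<bullet> fst v + b \<le> snd v}"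
  by (auto simp: upper_halfspace_def intro!: bexI[of _ "(fst _, q \<bullet> fst _ + b)"])

lemma direction_of_nonvertical_hyperplane:
  "direction_of {v. snd v = q \<bullet> fst v + b} = {v. snd v = q \<bullet> fst v}"
proof (intro equalityI subsetI)
  fix v :: "'a::real_inner \<times> real"
  assume "v \<in> {v. snd v = q \<bullet> fst v}"
  then have "v + (0, b) \<in> {v. snd v = q \<bullet> fst v + b}" and "(0, b) \<in> {v. snd v = q \<bullet> fst v + b}"
    by auto
  moreover have "v = (v + (0, b)) - (0, b)"
    by simp
  ultimately show "v \<in> direction_of {v. snd v = q \<bullet> fst v + b}"
    unfolding direction_of_def by blast
qed (auto simp: direction_of_def inner_diff_right)

lemma affine_hull_eq_hyperplane:
  fixes S :: "'a::euclidean_space set"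
  assumes "S \<subseteq> {x. n \<bullet> x = b}" and "n \<noteq> 0" and "aff_dim S = int DIM('a) - 1"
  shows "affine hull S = {x. n \<bullet> x = b}"
proof (rule affine_dim_equal)
  have "S \<noteq> {}"
    using assms(3) DIM_positive[where 'a='a] by auto
  then show "affine hull S \<noteq> {}"
    by simp
  show "affine hull S \<subseteq> {x. n \<bullet> x = b}"
    using assms(1) by (intro hull_minimal affine_hyperplane)
qed (use assms in \<open>auto simp: affine_hyperplane\<close>)

lemma aff_dim_affine_graph:
  fixes S :: "'a::euclidean_space set"
  shows "aff_dim ((\<lambda>y. (y, q \<bullet> y + b)) ` S) = aff_dim S"
proof -
  have "linear (\<lambda>y::'a. (y, q \<bullet> y))"
    by (intro linearI) (auto simp: inner_add_right)
  moreover have "inj (\<lambda>y::'a. (y, q \<bullet> y))"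
    by (intro injI) simp
  moreover have "(\<lambda>y. (y, q \<bullet> y + b)) ` S = (+) (0, b) ` (\<lambda>y. (y, q \<bullet> y)) ` S"
    by (auto simp: image_image)
  ultimately show ?thesis
    by (simp only: aff_dim_translation_eq aff_dim_injective_linear_image)
qed

lemma nonempty_interior_avoids_hyperplanes:
  fixes S :: "'a::euclidean_space set" and w :: "'k \<Rightarrow> 'a"
  assumes "interior S \<noteq> {}" and "finite K" and "\<And>k. k \<in> K \<Longrightarrow> w k \<noteq> 0"
  obtains x where "x \<in> S" and "x \<noteq> 0" and "\<And>k. k \<in> K \<Longrightarrow> w k \<bullet> x \<noteq> 0"
proof -
  let ?Z = "{0} \<union> (\<Union>k\<in>K. {x. w k \<bullet> x = 0})"
  have "negligible ?Z"
    using assms(2,3) negligible_hyperplane by auto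
  then have "\<not> interior S \<subseteq> ?Z"
    using negligible_subset open_not_negligible[OF open_interior assms(1)] by blast
  then show thesis
    using interior_subset that by blast
qed

lemma eventually_ray_in_halfspaces:
  fixes x :: "'a::real_inner"
  assumes "finite K" and "\<And>k. k \<in> K \<Longrightarrow> w k \<bullet> x > 0"
  shows "eventually (\<lambda>t. \<forall>k\<in>K. d k < w k \<bullet> (t *\<^sub>R x)) at_top"
proof (intro eventually_ball_finite assms(1) ballI)
  fix k assume "k \<in> K"
  then have "w k \<bullet> x > 0"
    by (rule assms(2))
  show "eventually (\<lambda>t. d k < w k \<bullet> (t *\<^sub>R x)) at_top"
    using eventually_gt_at_top[of "d k / (w k \<bullet> x)"]
    by eventually_elim (use \<open>w k \<bullet> x > 0\<close> in \<open>simp add: pos_divide_less_eq\<close>)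
qed

lemma not_bounded_if_eventually_ray:
  fixes x :: "'a::real_normed_vector"
  assumes "eventually (\<lambda>t. t *\<^sub>R x \<in> S) at_top" and "x \<noteq> 0"
  shows "\<not> bounded S"
proof
  assume "bounded S"
  then obtain B where B: "\<And>y. y \<in> S \<Longrightarrow> norm y \<le> B"
    by (auto simp: bounded_iff)
  obtain t where "t *\<^sub>R x \<in> S" and "B / norm x < t" and "0 < t"
    using eventually_happens'[OF _ eventually_conj[OF assms(1) eventually_conj[OF
          eventually_gt_at_top[of "B / norm x"] eventually_gt_at_top[of 0]]]]
    by auto
  then have "B < norm (t *\<^sub>R x)"
    using assms(2) by (simp add: pos_divide_less_eq)
  then show False
    using B[OF \<open>t *\<^sub>R x \<in> S\<close>] by simp
qed

section \<open>Epigraphs of maxima of finitely many affine functions\<close>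

text \<open>\<open>P\<^sub>+\<close> will be \<open>max_affine_epigraph I a c\<close> and \<open>T\<^sub>+\<close> its recession cone, the case \<open>c = 0\<close>.\<close>

definition max_affine_epigraph :: "'i set \<Rightarrow> ('i \<Rightarrow> 'a::euclidean_space) \<Rightarrow> ('i \<Rightarrow> real) \<Rightarrow> ('a \<times> real) set"
  where "max_affine_epigraph I a c = {v. \<forall>i\<in>I. a i \<bullet> fst v + c i \<le> snd v}"

lemma max_affine_epigraph_eq_Inter_halfspaces:
  "max_affine_epigraph I a c = (\<Inter>i\<in>I. {v. (a i, -1) \<bullet> v \<le> - c i})"
  by (auto simp: max_affine_epigraph_def inner_prod_def algebra_simps)

lemma convex_max_affine_epigraph: "convex (max_affine_epigraph I a c)"
  unfolding max_affine_epigraph_eq_Inter_halfspaces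
  by (intro convex_INT convex_halfspace_le)

lemma polyhedron_max_affine_epigraph:
  "finite I \<Longrightarrow> polyhedron (max_affine_epigraph I a c)"
  unfolding max_affine_epigraph_eq_Inter_halfspaces
  by (intro polyhedron_Inter) (auto simp: polyhedron_halfspace_le)

lemma max_affine_epigraph_contains_vertical_ray:
  assumes "finite I"
  obtains t where "\<And>t'. t \<le> t' \<Longrightarrow> (x, t') \<in> max_affine_epigraph I a c"
proof
  fix t' assume le: "(\<Sum>i\<in>I. \<bar>a i \<bullet> x + c i\<bar>) \<le> t'"
  have "a i \<bullet> x + c i \<le> (\<Sum>i\<in>I. \<bar>a i \<bullet> x + c i\<bar>)" if "i \<in> I" for i
    using member_le_sum[OF that _ assms, of "\<lambda>i. \<bar>a i \<bullet> x + c i\<bar>"] by simp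
  with le show "(x, t') \<in> max_affine_epigraph I a c"
    by (force simp: max_affine_epigraph_def)
qed

lemma aff_dim_max_affine_epigraph:
  fixes a :: "'i \<Rightarrow> 'a::euclidean_space"
  assumes "finite I"
  shows "aff_dim (max_affine_epigraph I a c) = int DIM('a) + 1"
proof -
  let ?O = "\<Inter>i\<in>I. {v::'a \<times> real. (a i, -1) \<bullet> v < - c i}"
  obtain t where t: "(0, t) \<in> max_affine_epigraph I a c"
    using max_affine_epigraph_contains_vertical_ray[OF assms] by blast
  have "open ?O"
    using assms by (auto intro!: open_halfspace_lt)
  moreover have "?O \<subseteq> max_affine_epigraph I a c"
    unfolding max_affine_epigraph_eq_Inter_halfspaces by (auto intro: less_imp_le)
  moreover have "(0, t + 1) \<in> ?O"
    using t by (force simp: max_affine_epigraph_def)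
  ultimately have "interior (max_affine_epigraph I a c) \<noteq> {}"
    using interior_maximal by blast
  then show ?thesis
    by (simp add: aff_dim_nonempty_interior)
qed

lemma max_affine_epigraph_supporting_normal_snd_neg:
  assumes "finite I" and "max_affine_epigraph I a c \<subseteq> {v. n \<bullet> v \<le> b}" and "n \<noteq> 0"
  shows "snd n < 0"
proof -
  have bound: "fst n \<bullet> x + snd n * t \<le> b" if "(x, t) \<in> max_affine_epigraph I a c" for x t
    using assms(2) that by (force simp: inner_prod_def)
  obtain t0 where t0: "\<And>t. t0 \<le> t \<Longrightarrow> (0, t) \<in> max_affine_epigraph I a c"
    using max_affine_epigraph_contains_vertical_ray[OF assms(1)] by blast
  have "\<not> snd n > 0"
  proof
    assume pos: "snd n > 0"
    let ?t = "max t0 ((\<bar>b\<bar> + 1) / snd n)"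
    have "(\<bar>b\<bar> + 1) / snd n \<le> ?t"
      by simp
    with pos have "\<bar>b\<bar> + 1 \<le> snd n * ?t"
      by (metis pos_divide_le_eq mult.commute)
    moreover have "snd n * ?t \<le> b"
      using bound[OF t0[of ?t]] by simp
    ultimately show False
      by linarith
  qed
  moreover have "snd n \<noteq> 0"
  proof
    assume s0: "snd n = 0"
    with assms(3) have "fst n \<noteq> 0" by (simp add: prod_eq_iff)
    define x where "x = ((\<bar>b\<bar> + 1) / (fst n \<bullet> fst n)) *\<^sub>R fst n"
    obtain t where "(x, t) \<in> max_affine_epigraph I a c"
      using max_affine_epigraph_contains_vertical_ray[OF assms(1)] by blast
    then have "fst n \<bullet> x \<le> b" using bound s0 by fastforce
    then show False using \<open>fst n \<noteq> 0\<close> by (simp add: x_def)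
  qed
  ultimately show ?thesis by linarith
qed

lemma max_affine_cone_facet:
  fixes a :: "'i \<Rightarrow> 'a::euclidean_space"
  assumes "finite I" and G: "G facet_of max_affine_epigraph I a (\<lambda>_. 0)"
  obtains q where "max_affine_epigraph I a (\<lambda>_. 0) \<subseteq> {v. q \<bullet> fst v \<le> snd v}"
    and "G = max_affine_epigraph I a (\<lambda>_. 0) \<inter> {v. snd v = q \<bullet> fst v}"
proof -
  let ?C = "max_affine_epigraph I a (\<lambda>_. 0)"
  obtain n b where n0: "n \<noteq> 0" and Csub: "?C \<subseteq> {v. n \<bullet> v \<le> b}"
    and Geq: "G = ?C \<inter> {v. n \<bullet> v = b}"
    using facet_of_polyhedron[OF polyhedron_max_affine_epigraph[OF assms(1)] G] by blast
  have s: "snd n < 0"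
    using max_affine_epigraph_supporting_normal_snd_neg[OF assms(1) Csub n0] .
  have cone: "r *\<^sub>R v \<in> ?C" if "v \<in> ?C" "0 \<le> r" for v r
    using that by (auto simp: max_affine_epigraph_def intro: mult_left_mono)
  have "(0, 0) \<in> ?C"
    by (simp add: max_affine_epigraph_def)
  then have "n \<bullet> (0, 0) \<le> b"
    using Csub by blast
  then have "0 \<le> b"
    by (simp add: inner_prod_def)
  moreover have "b \<le> 0"
  proof -
    obtain g where "g \<in> ?C" "n \<bullet> g = b"
      using G Geq by (auto simp: facet_of_def)
    then have "n \<bullet> (2 *\<^sub>R g) \<le> b"
      using Csub cone[of g 2] by auto
    with \<open>n \<bullet> g = b\<close> show ?thesis by simp
  qed
  ultimately have b0: "b = 0" by simp
  define q where "q = - (1 / snd n) *\<^sub>R fst n"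
  have nq: "n \<bullet> v = snd n * (snd v - q \<bullet> fst v)" for v
    using s by (simp add: q_def inner_prod_def algebra_simps)
  show thesis
  proof
    show "?C \<subseteq> {v. q \<bullet> fst v \<le> snd v}"
      using Csub s by (auto simp: b0 nq mult_le_0_iff)
    show "G = ?C \<inter> {v. snd v = q \<bullet> fst v}"
      using s by (auto simp: Geq b0 nq)
  qed
qed

lemma affine_hull_max_affine_cone_facet:
  fixes a :: "'i \<Rightarrow> 'a::euclidean_space"
  assumes "finite I" and G: "G facet_of max_affine_epigraph I a (\<lambda>_. 0)"
    and Geq: "G = max_affine_epigraph I a (\<lambda>_. 0) \<inter> {v. snd v = q \<bullet> fst v}"
  shows "affine hull G = {v. snd v = q \<bullet> fst v}"
proof -
  have "aff_dim G = int DIM('a)"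
    using G aff_dim_max_affine_epigraph[OF assms(1), of a "\<lambda>_. 0"] by (simp add: facet_of_def)
  then show ?thesis
    unfolding nonvertical_hyperplane_eq[of q 0, simplified] using Geq
    by (intro affine_hull_eq_hyperplane) (auto simp: inner_prod_def zero_prod_def)
qed

lemma max_affine_cone_facet_generic_point:
  fixes a :: "'i \<Rightarrow> 'a::euclidean_space"
  assumes "finite I" and G: "G facet_of max_affine_epigraph I a (\<lambda>_. 0)"
    and Geq: "G = max_affine_epigraph I a (\<lambda>_. 0) \<inter> {v. snd v = q \<bullet> fst v}"
  obtains x where "x \<noteq> 0" and "\<And>i. i \<in> I \<Longrightarrow> a i \<noteq> q \<Longrightarrow> a i \<bullet> x < q \<bullet> x"
proof -
  have "affine hull (fst ` G) = UNIV"
    using affine_hull_max_affine_cone_facet[OF assms]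
    by (force simp flip: affine_hull_linear_image[OF bounded_linear_fst] intro: image_eqI[of _ _ "(_, _)"])
  moreover have "convex (fst ` G)" and "G \<noteq> {}"
    using G by (auto simp: facet_of_def face_of_imp_convex intro: convex_linear_image linear_fst)
  ultimately have "interior (fst ` G) \<noteq> {}"
    by (metis rel_interior_interior rel_interior_eq_empty image_is_empty)
  then obtain x where x: "x \<in> fst ` G" "x \<noteq> 0" and avoid: "\<And>i. i \<in> {i\<in>I. a i \<noteq> q} \<Longrightarrow> (q - a i) \<bullet> x \<noteq> 0"
    using nonempty_interior_avoids_hyperplanes[of "fst ` G" "{i\<in>I. a i \<noteq> q}" "\<lambda>i. q - a i"] assms(1)
    by auto
  have "a i \<bullet> x \<le> q \<bullet> x" if "i \<in> I" for i
    using x(1) that by (auto simp: Geq max_affine_epigraph_def)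
  then show thesis
    using that x(2) avoid by (force simp: inner_diff_left)
qed

lemma max_affine_cone_supporting_slope:
  fixes a :: "'i \<Rightarrow> 'a::euclidean_space"
  assumes "finite I" and "max_affine_epigraph I a (\<lambda>_. 0) \<subseteq> {v. q \<bullet> fst v \<le> snd v}"
    and "\<And>i. i \<in> I \<Longrightarrow> a i \<noteq> q \<Longrightarrow> a i \<bullet> x < q \<bullet> x"
  shows "q \<in> a ` I"
proof (rule ccontr)
  assume "q \<notin> a ` I"
  define t where "t = Max (insert (q \<bullet> x - 1) ((\<lambda>i. a i \<bullet> x) ` I))"
  have "t < q \<bullet> x"
    unfolding t_def using assms(1,3) \<open>q \<notin> a ` I\<close> by (auto simp: Max_less_iff)
  moreover have "(x, t) \<in> max_affine_epigraph I a (\<lambda>_. 0)"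
    unfolding t_def max_affine_epigraph_def using assms(1) by auto
  ultimately show False
    using assms(2) by fastforce
qed

lemma max_affine_epigraph_unbounded_facet:
  fixes a :: "'i \<Rightarrow> 'a::euclidean_space"
  assumes "finite I" and "j \<in> I" and cmax: "\<And>i. i \<in> I \<Longrightarrow> a i = a j \<Longrightarrow> c i \<le> c j"
    and "x \<noteq> 0" and strict: "\<And>i. i \<in> I \<Longrightarrow> a i \<noteq> a j \<Longrightarrow> a i \<bullet> x < a j \<bullet> x"
  defines "H \<equiv> max_affine_epigraph I a c \<inter> {v. snd v = a j \<bullet> fst v + c j}"
  shows "H facet_of max_affine_epigraph I a c" and "\<not> bounded H"
    and "affine hull H = {v. snd v = a j \<bullet> fst v + c j}"
proof -
  let ?E = "max_affine_epigraph I a c"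
  let ?K = "{i\<in>I. a i \<noteq> a j}"
  \<comment> \<open>\<open>V\<close> is open and contains a tail of the ray through \<open>x\<close>; the part of \<open>H\<close> over \<open>V\<close> makes \<open>H\<close>
    full-dimensional and unbounded.\<close>
  define V where "V = (\<Inter>i\<in>?K. {y. c i - c j < (a j - a i) \<bullet> y})"
  have graph_in_H: "(y, a j \<bullet> y + c j) \<in> H" if "y \<in> V" for y
  proof -
    have "a i \<bullet> y + c i \<le> a j \<bullet> y + c j" if "i \<in> I" for i
      using \<open>y \<in> V\<close> cmax[OF that] that by (cases "a i = a j") (auto simp: V_def inner_diff_left)
    then show ?thesis
      by (simp add: H_def max_affine_epigraph_def)
  qed
  have "open V"
    unfolding V_def using assms(1) by (auto intro!: open_halfspace_gt)
  have ray: "eventually (\<lambda>t. t *\<^sub>R x \<in> V) at_top"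
    using eventually_ray_in_halfspaces[of ?K "\<lambda>i. a j - a i" x "\<lambda>i. c i - c j"] assms(1) strict
    by (simp add: V_def inner_diff_left right_diff_distrib)
  then have "V \<noteq> {}"
    using eventually_happens' by fastforce
  have "aff_dim H \<le> aff_dim {v. (- a j, 1::real) \<bullet> v = c j}"
    by (rule aff_dim_subset) (auto simp: H_def inner_prod_def)
  moreover have "aff_dim ((\<lambda>y. (y, a j \<bullet> y + c j)) ` V) \<le> aff_dim H"
    using graph_in_H by (intro aff_dim_subset) blast
  ultimately have dimH: "aff_dim H = int DIM('a)"
    using aff_dim_open[OF \<open>open V\<close> \<open>V \<noteq> {}\<close>] by (simp add: aff_dim_affine_graph zero_prod_def)
  show "affine hull H = {v. snd v = a j \<bullet> fst v + c j}"
    unfolding nonvertical_hyperplane_eq using dimH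
    by (intro affine_hull_eq_hyperplane) (auto simp: H_def inner_prod_def zero_prod_def)
  have "H face_of ?E"
    unfolding H_def nonvertical_hyperplane_eq using assms(2)
    by (intro face_of_Int_supporting_hyperplane_ge convex_max_affine_epigraph)
      (auto simp: max_affine_epigraph_def inner_prod_def)
  moreover have "H \<noteq> {}"
    using graph_in_H \<open>V \<noteq> {}\<close> by blast
  ultimately show "H facet_of ?E"
    using dimH aff_dim_max_affine_epigraph[OF assms(1), of a c] by (simp add: facet_of_def)
  have "eventually (\<lambda>t. t *\<^sub>R x \<in> fst ` H) at_top"
    using ray by eventually_elim (use graph_in_H in force)
  then show "\<not> bounded H"
    using not_bounded_if_eventually_ray[OF _ \<open>x \<noteq> 0\<close>] bounded_fst by blast
qed

lemma max_affine_epigraph_facet_parallel_to_cone_facet: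
  fixes a :: "'i \<Rightarrow> 'a::euclidean_space"
  assumes "finite I" and G: "G facet_of max_affine_epigraph I a (\<lambda>_. 0)"
  obtains H where "H facet_of max_affine_epigraph I a c" and "\<not> bounded H" and "parallel_sets H G"
proof -
  obtain q where supp: "max_affine_epigraph I a (\<lambda>_. 0) \<subseteq> {v. q \<bullet> fst v \<le> snd v}"
    and Geq: "G = max_affine_epigraph I a (\<lambda>_. 0) \<inter> {v. snd v = q \<bullet> fst v}"
    using max_affine_cone_facet[OF assms] by blast
  obtain x where "x \<noteq> 0" and strict: "\<And>i. i \<in> I \<Longrightarrow> a i \<noteq> q \<Longrightarrow> a i \<bullet> x < q \<bullet> x"
    using max_affine_cone_facet_generic_point[OF assms Geq] by blast
  define J where "J = {i\<in>I. a i = q}"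
  have "finite J" and "J \<noteq> {}"
    using assms(1) max_affine_cone_supporting_slope[OF assms(1) supp strict] by (auto simp: J_def)
  then have "Max (c ` J) \<in> c ` J"
    by simp
  then obtain j where "j \<in> J" and cj: "c j = Max (c ` J)"
    by (metis imageE)
  have "c i \<le> c j" if "i \<in> J" for i
    unfolding cj using \<open>finite J\<close> that by simp
  then have "j \<in> I" and aj: "a j = q" and cmax: "\<And>i. i \<in> I \<Longrightarrow> a i = a j \<Longrightarrow> c i \<le> c j"
    using \<open>j \<in> J\<close> by (auto simp: J_def)
  have strict': "\<And>i. i \<in> I \<Longrightarrow> a i \<noteq> a j \<Longrightarrow> a i \<bullet> x < a j \<bullet> x"
    using strict aj by simp
  note H = max_affine_epigraph_unbounded_facet[where a = a and c = c, OF assms(1) \<open>j \<in> I\<close> cmax \<open>x \<noteq> 0\<close> strict']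
  let ?H = "max_affine_epigraph I a c \<inter> {v. snd v = a j \<bullet> fst v + c j}"
  have "affine hull ?H = {v. snd v = q \<bullet> fst v + c j}"
    using H(3) by (simp add: aj)
  also have "\<dots> = (+) (0, c j) ` (affine hull G)"
    unfolding affine_hull_max_affine_cone_facet[OF assms Geq] by (rule nonvertical_hyperplane_translate)
  finally have "parallel_sets ?H G"
    by (auto simp: parallel_sets_def)
  with H(1,2) show thesis
    by (rule that)
qed

section \<open>The lifting of a simplicial polytope\<close>

lemma polytope_vertices:
  assumes "polytope P"
  shows "finite (vertices P)" and "P = convex hull (vertices P)"
proof -
  show "finite (vertices P)"
    using finite_polyhedron_extreme_points[OF polytope_imp_polyhedron[OF assms]]
    by (simp add: vertices_def)
  obtain S where "finite S" and "P = convex hull S"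
    using assms by (auto simp: polytope_def)
  then show "P = convex hull (vertices P)"
    using Krein_Milman_polytope by (simp add: vertices_def)
qed

lemma card_vertices_of_non_simplex:
  fixes P :: "'a::euclidean_space set"
  assumes "polytope P" and "aff_dim P = int DIM('a)" and "\<not> int DIM('a) simplex P"
  shows "DIM('a) + 2 \<le> card (vertices P)"
proof -
  note V = polytope_vertices[OF assms(1)]
  have dimV: "aff_dim (vertices P) = int DIM('a)"
    using assms(2) V(2) by (metis aff_dim_convex_hull)
  then have "DIM('a) + 1 \<le> card (vertices P)"
    using aff_dim_le_card[OF V(1)] by simp
  moreover have "card (vertices P) \<noteq> DIM('a) + 1"
  proof
    assume "card (vertices P) = DIM('a) + 1"
    then have "\<not> affine_dependent (vertices P)"
      using affine_independent_iff_card[of "vertices P"] V(1) dimV by simp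
    moreover have "int (card (vertices P)) = int DIM('a) + 1"
      using \<open>card (vertices P) = DIM('a) + 1\<close> by simp
    ultimately show False
      using assms(3) V(2) unfolding simplex_def by blast
  qed
  ultimately show ?thesis
    by simp
qed

lemma polytope_lifting:
  "polytope P \<Longrightarrow> polytope (lifting P)"
  by (simp add: lifting_def polytope_vertices polytope_convex_hull)

lemma inner_lift_map: "n \<bullet> lift_map x = fst n \<bullet> x + snd n * (norm x)\<^sup>2"
  by (simp add: lift_map_def inner_prod_def)

lemma lift_map_preimage_hyperplane:
  fixes S :: "'a::euclidean_space set"
  assumes "n \<noteq> 0" and "\<And>x. x \<in> S \<Longrightarrow> n \<bullet> lift_map x = b"
  shows "(\<exists>p. p \<noteq> 0 \<and> S \<subseteq> {x. p \<bullet> x = b}) \<or> (\<exists>c r. S \<subseteq> sphere c r)"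
proof (cases "snd n = 0")
  case True
  then show ?thesis
    using assms by (auto simp: inner_lift_map prod_eq_iff)
next
  case False
  define k where "k = 1 / (2 * snd n)"
  define c where "c = - k *\<^sub>R fst n"
  define R where "R = b / snd n + (norm (fst n))\<^sup>2 / (4 * (snd n)\<^sup>2)"
  \<comment> \<open>completing the square in \<open>fst n \<bullet> x + snd n * (norm x)\<^sup>2 = b\<close>\<close>
  have "(norm (x - c))\<^sup>2 = R" if "x \<in> S" for x
  proof -
    have "(norm (x - c))\<^sup>2 = (norm x)\<^sup>2 + 2 * k * (fst n \<bullet> x) + k\<^sup>2 * (norm (fst n))\<^sup>2"
      unfolding c_def power2_norm_eq_inner
      by (simp add: inner_add_left inner_add_right inner_commute algebra_simps power2_eq_square)
    also have "(norm x)\<^sup>2 = (b - fst n \<bullet> x) / snd n"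
      using assms(2)[OF that] False by (simp add: inner_lift_map field_simps)
    also have "(b - fst n \<bullet> x) / snd n + 2 * k * (fst n \<bullet> x) + k\<^sup>2 * (norm (fst n))\<^sup>2 = R"
      using False by (simp add: R_def k_def field_simps power2_eq_square)
    finally show ?thesis .
  qed
  then have "S \<subseteq> sphere c (sqrt R)"
    by (auto simp: dist_norm norm_minus_commute) (metis norm_ge_zero real_sqrt_unique)
  then show ?thesis
    by blast
qed

lemma aff_dim_lifting:
  fixes P :: "'a::euclidean_space set"
  assumes "polytope P" and dimP: "aff_dim P = int DIM('a)" and gen: "generic_polytope P"
  shows "aff_dim (lifting P) = int DIM('a) + 1"
proof (rule ccontr)
  note V = polytope_vertices[OF assms(1)]
  have dimV: "aff_dim (vertices P) = int DIM('a)"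
    using dimP V(2) by (metis aff_dim_convex_hull)
  assume "aff_dim (lifting P) \<noteq> int DIM('a) + 1"
  then have "aff_dim (lifting P) < int DIM('a \<times> real)"
    using aff_dim_le_DIM[of "lifting P"] by simp
  then obtain n b where "n \<noteq> 0" and "lifting P \<subseteq> {x. n \<bullet> x = b}"
    by (rule aff_lowdim_subset_hyperplane)
  moreover have "lift_map x \<in> lifting P" if "x \<in> vertices P" for x
    using that by (simp add: lifting_def hull_inc)
  ultimately have "(\<exists>p. p \<noteq> 0 \<and> vertices P \<subseteq> {x. p \<bullet> x = b}) \<or> (\<exists>c r. vertices P \<subseteq> sphere c r)"
    by (intro lift_map_preimage_hyperplane) auto
  then show False
  proof (elim disjE exE conjE)
    fix p :: 'a assume "p \<noteq> 0" and "vertices P \<subseteq> {x. p \<bullet> x = b}"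
    then show False
      using aff_dim_subset[of "vertices P" "{x. p \<bullet> x = b}"] dimV by simp
  next
    fix c :: 'a and r assume sph: "vertices P \<subseteq> sphere c r"
    show False
    proof (cases "r > 0")
      case True
      obtain S where "S \<subseteq> vertices P" and "card S = DIM('a) + 2"
        using card_vertices_of_non_simplex[OF assms(1) dimP] gen obtain_subset_with_card_n
        by (metis generic_polytope_def)
      then show False
        using gen sph True unfolding generic_polytope_def by (meson subset_trans)
    next
      case False
      then have "sphere c r \<subseteq> {c}"
        by (metis dist_le_zero_iff mem_sphere not_less singletonI subsetI)
      then have "vertices P \<subseteq> {c}"
        using sph by blast
      then show False
        using aff_dim_subset[of "vertices P" "{c}"] dimV by simp
    qed
  qed
qed

lemma card_vertices_in_proper_face:
  fixes P :: "'a::euclidean_space set"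
  assumes simpl: "simplicial_polytope P" and dimP: "aff_dim P = int DIM('a)"
    and "E face_of P" and "E \<noteq> P"
  shows "card (vertices P \<inter> E) \<le> DIM('a)"
proof (cases "E = {}")
  case False
  have "polyhedron P"
    using simpl by (simp add: simplicial_polytope_def polytope_imp_polyhedron)
  then obtain F where F: "F facet_of P" and "E \<subseteq> F"
    using face_of_polyhedron_subset_facet[OF _ assms(3) False assms(4)] by blast
  then obtain m C where "m simplex F" and "\<not> affine_dependent C"
    and cardC: "int (card C) = m + 1" and FC: "F = convex hull C"
    using simpl by (metis simplicial_polytope_def simplex_def)
  have "m = int DIM('a) - 1"
    using aff_dim_simplex[OF \<open>m simplex F\<close>] F dimP by (simp add: facet_of_def)
  have "vertices P \<inter> E \<subseteq> C"
  proof
    fix x assume "x \<in> vertices P \<inter> E"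
    then have "x extreme_point_of F"
      using \<open>E \<subseteq> F\<close> extreme_point_of_face[OF facet_of_imp_face_of[OF F]]
      by (auto simp: vertices_def)
    then show "x \<in> C"
      unfolding FC by (rule extreme_point_of_convex_hull)
  qed
  then have "card (vertices P \<inter> E) \<le> card C"
    by (rule card_mono[OF aff_independent_finite[OF \<open>\<not> affine_dependent C\<close>]])
  with cardC \<open>m = int DIM('a) - 1\<close> show ?thesis
    by linarith
qed simp

lemma aff_dim_vertical_face_of_lifting:
  fixes P :: "'a::euclidean_space set"
  assumes simpl: "simplicial_polytope P" and dimP: "aff_dim P = int DIM('a)"
    and F: "F face_of lifting P" and "p \<noteq> 0"
    and below: "lifting P \<subseteq> {v. p \<bullet> fst v \<le> b}" and on: "F \<subseteq> {v. p \<bullet> fst v = b}"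
  shows "aff_dim F < int DIM('a)"
proof -
  have "polytope P"
    using simpl by (simp add: simplicial_polytope_def)
  note V = polytope_vertices[OF this]
  have lift_in: "lift_map x \<in> lifting P" if "x \<in> vertices P" for x
    using that by (simp add: lifting_def hull_inc)
  have "vertices P \<subseteq> {y. p \<bullet> y \<le> b}"
    using lift_in below by (force simp: lift_map_def)
  then have P_below: "P \<subseteq> {y. p \<bullet> y \<le> b}"
    by (subst V(2)) (intro hull_minimal convex_halfspace_le)
  define E where "E = P \<inter> {y. p \<bullet> y = b}"
  have "E face_of P"
    unfolding E_def using \<open>polytope P\<close> P_below
    by (intro face_of_Int_supporting_hyperplane_le polytope_imp_convex) auto
  moreover have "E \<noteq> P"
    using aff_dim_subset[of P "{y. p \<bullet> y = b}"] dimP \<open>p \<noteq> 0\<close> by (auto simp: E_def)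
  ultimately have card_le: "card (vertices P \<inter> E) \<le> DIM('a)"
    by (rule card_vertices_in_proper_face[OF simpl dimP])
  obtain S where S: "S \<subseteq> lift_map ` vertices P" and FS: "F = convex hull S"
    using face_of_convex_hull_subset[of "lift_map ` vertices P" F] F V(1)
    by (auto simp: lifting_def finite_imp_compact)
  have "S \<subseteq> lift_map ` (vertices P \<inter> E)"
  proof
    fix y assume "y \<in> S"
    then obtain x where x: "x \<in> vertices P" and y: "y = lift_map x"
      using S by blast
    have "y \<in> F"
      using \<open>y \<in> S\<close> hull_subset by (force simp: FS)
    then have "x \<in> E"
      using x on by (auto simp: E_def y lift_map_def vertices_def extreme_point_of_def)
    with x y show "y \<in> lift_map ` (vertices P \<inter> E)"
      by blast
  qed
  then have "card S \<le> DIM('a)"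
    using card_le V(1) by (meson card_image_le card_mono finite_Int finite_imageI le_trans)
  moreover have "finite S"
    using S V(1) finite_subset by blast
  ultimately show ?thesis
    using aff_dim_le_card[of S] by (simp add: FS aff_dim_convex_hull)
qed

lemma lifting_facet_nonvertical:
  fixes P :: "'a::euclidean_space set"
  assumes simpl: "simplicial_polytope P" and dimP: "aff_dim P = int DIM('a)"
    and gen: "generic_polytope P" and F: "F facet_of lifting P"
  obtains q \<beta> where "affine hull F = {v. snd v = q \<bullet> fst v + \<beta>}"
proof -
  have "polytope P"
    using simpl by (simp add: simplicial_polytope_def)
  then have "polyhedron (lifting P)"
    by (simp add: polytope_lifting polytope_imp_polyhedron)
  then obtain n b where "n \<noteq> 0" and below: "lifting P \<subseteq> {v. n \<bullet> v \<le> b}"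
    and Feq: "F = lifting P \<inter> {v. n \<bullet> v = b}"
    using facet_of_polyhedron[OF _ F] by blast
  have dimF: "aff_dim F = int DIM('a)"
    using F aff_dim_lifting[OF \<open>polytope P\<close> dimP gen] by (simp add: facet_of_def)
  have hull: "affine hull F = {v. n \<bullet> v = b}"
    using Feq \<open>n \<noteq> 0\<close> dimF by (intro affine_hull_eq_hyperplane) auto
  have "snd n \<noteq> 0"
  proof
    assume "snd n = 0"
    then have "fst n \<noteq> 0" and "\<And>v. n \<bullet> v = fst n \<bullet> fst v"
      using \<open>n \<noteq> 0\<close> by (auto simp: inner_prod_def prod_eq_iff)
    then have "aff_dim F < int DIM('a)"
      using below Feq F
      by (intro aff_dim_vertical_face_of_lifting[OF simpl dimP, of F "fst n" b])
        (auto simp: facet_of_def)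
    with dimF show False
      by simp
  qed
  have "n \<bullet> v = b \<longleftrightarrow> snd v = (- (1 / snd n) *\<^sub>R fst n) \<bullet> fst v + b / snd n" for v
  proof -
    have "n \<bullet> v = b \<longleftrightarrow> snd v * snd n = b - fst n \<bullet> fst v"
      by (auto simp: inner_prod_def algebra_simps)
    also have "\<dots> \<longleftrightarrow> snd v = (b - fst n \<bullet> fst v) / snd n"
      using \<open>snd n \<noteq> 0\<close> by (simp add: eq_divide_eq)
    finally show ?thesis
      by (simp add: diff_divide_distrib)
  qed
  then have "affine hull F = {v. snd v = (- (1 / snd n) *\<^sub>R fst n) \<bullet> fst v + b / snd n}"
    unfolding hull by blast
  then show thesis
    by (rule that)
qed

lemma lifting_facets_nonvertical:
  fixes P :: "'a::euclidean_space set"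
  assumes "simplicial_polytope P" and "aff_dim P = int DIM('a)" and "generic_polytope P"
  obtains a c where "\<And>F. F facet_of lifting P \<Longrightarrow> affine hull F = {v. snd v = a F \<bullet> fst v + c F}"
proof -
  have "\<forall>F. \<exists>qb. F facet_of lifting P \<longrightarrow> affine hull F = {v. snd v = fst qb \<bullet> fst v + snd qb}"
  proof
    fix F
    show "\<exists>qb. F facet_of lifting P \<longrightarrow> affine hull F = {v. snd v = fst qb \<bullet> fst v + snd qb}"
      using lifting_facet_nonvertical[OF assms, of F] by (metis fst_conv snd_conv)
  qed
  then obtain ac where "\<And>F. F facet_of lifting P \<Longrightarrow> affine hull F = {v. snd v = fst (ac F) \<bullet> fst v + snd (ac F)}"
    by metis
  then show thesis
    by (rule that)
qed

lemma finite_facets_lifting: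
  "polytope P \<Longrightarrow> finite {F. F facet_of lifting P}"
  using finite_polytope_faces[OF polytope_lifting] by (rule finite_subset[rotated]) (auto simp: facet_of_def)

lemma P_plus_eq_max_affine_epigraph:
  assumes "\<And>F. F facet_of lifting P \<Longrightarrow> affine hull F = {v. snd v = a F \<bullet> fst v + c F}"
  shows "P_plus P = max_affine_epigraph {F. F facet_of lifting P} a c"
  using assms by (auto simp: P_plus_def max_affine_epigraph_def upper_halfspace_nonvertical_hyperplane)

lemma T_plus_eq_max_affine_epigraph:
  assumes "\<And>F. F facet_of lifting P \<Longrightarrow> affine hull F = {v. snd v = a F \<bullet> fst v + c F}"
  shows "T_plus P = max_affine_epigraph {F. F facet_of lifting P} a (\<lambda>_. 0)"
proof -
  have "upper_halfspace (direction_of (affine hull F)) = {v. a F \<bullet> fst v \<le> snd v}"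
    if "F facet_of lifting P" for F
    using upper_halfspace_nonvertical_hyperplane[of "a F" 0]
    by (simp add: assms[OF that] direction_of_nonvertical_hyperplane)
  then show ?thesis
    by (auto simp: T_plus_def max_affine_epigraph_def)
qed

theorem mainTheorem6:
  fixes P :: "'a::euclidean_space set"
  assumes "DIM('a) \<ge> 2"
    and "convex P" and "simplicial_polytope P" and "aff_dim P = int DIM('a)"
    and "generic_polytope P"
  shows "\<forall>G. G facet_of T_plus P \<longrightarrow>
           (\<exists>H. H facet_of P_plus P \<and> \<not> bounded H \<and> parallel_sets H G)"
proof (intro allI impI)
  fix G assume G: "G facet_of T_plus P"
  have finite_facets: "finite {F. F facet_of lifting P}"
    using assms(3) by (simp add: simplicial_polytope_def finite_facets_lifting)
  obtain a c where hull: "\<And>F. F facet_of lifting P \<Longrightarrow> affine hull F = {v. snd v = a F \<bullet> fst v + c F}"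
    using lifting_facets_nonvertical[OF assms(3-5)] by blast
  have P_plus_eq: "P_plus P = max_affine_epigraph {F. F facet_of lifting P} a c"
    using hull by (rule P_plus_eq_max_affine_epigraph)
  have T_plus_eq: "T_plus P = max_affine_epigraph {F. F facet_of lifting P} a (\<lambda>_. 0)"
    using hull by (rule T_plus_eq_max_affine_epigraph)
  obtain H where "H facet_of max_affine_epigraph {F. F facet_of lifting P} a c"
    and "\<not> bounded H" and "parallel_sets H G"
    using max_affine_epigraph_facet_parallel_to_cone_facet[OF finite_facets G[unfolded T_plus_eq]] .
  then show "\<exists>H. H facet_of P_plus P \<and> \<not> bounded H \<and> parallel_sets H G"
    unfolding P_plus_eq by blast
qed

end
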